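(* For every $\alpha>1$ there exists a $1$-stable $c_\alpha$-approximation algorithm for the dynamic broadcast range-assignment problem in $\mathbb{R}^1$ with insertions only, where the approximation ratio $c_\alpha$ depends only on the distance-power gradient $\alpha$. For $\alpha=2$ the approximation ratio is $c_2=2(3+\sqrt5)\approx 10.47$.
   Context: A range assignment $\rho$ on a finite set $P\subset\mathbb{R}^1$ containing a source $s$ induces a directed graph with edge $(p,q)$ iff $|pq|\le\rho(p)$; it is feasible if the graph contains an arborescence rooted at $s$ spanning $P$; its cost is $\sum_p\rho(p)^\alpha$; $\mathrm{OPT}(P)$ is the minimum cost. In the insertion-only dynamic version, starting from $P=\{s\}$, points are inserted one at a time, and an update algorithm outputs a feasible assignment for the new set after each insertion; a point not yet in the set has range $0$. The algorithm is $1$-stable if each insertion modifies at most one range, and is a $c$-approximation if after every insertion its cost is at most $c\cdot\mathrm{OPT}(P)$. *)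

theory Defs
  imports Complex_Main
begin

definition range_assignment :: "real set \<Rightarrow> (real \<Rightarrow> real) \<Rightarrow> bool" where
  "range_assignment P \<rho> \<longleftrightarrow> (\<forall>p. 0 \<le> \<rho> p) \<and> (\<forall>p. p \<notin> P \<longrightarrow> \<rho> p = 0)"

definition induced_edges :: "real set \<Rightarrow> (real \<Rightarrow> real) \<Rightarrow> (real \<times> real) set" where
  "induced_edges P \<rho> = {(p, q). p \<in> P \<and> q \<in> P \<and> \<bar>p - q\<bar> \<le> \<rho> p}"

(* The induced graph contains an arborescence rooted at s spanning P
   iff every point of P is reachable from s. *)
definition feasible :: "real \<Rightarrow> real set \<Rightarrow> (real \<Rightarrow> real) \<Rightarrow> bool" where
  "feasible s P \<rho> \<longleftrightarrow> range_assignment P \<rho> \<and> s \<in> P \<and>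
     (\<forall>q\<in>P. (s, q) \<in> (induced_edges P \<rho>)\<^sup>*)"

definition cost :: "real \<Rightarrow> real set \<Rightarrow> (real \<Rightarrow> real) \<Rightarrow> real" where
  "cost \<alpha> P \<rho> = (\<Sum>p\<in>P. \<rho> p powr \<alpha>)"

definition OPT :: "real \<Rightarrow> real \<Rightarrow> real set \<Rightarrow> real" where
  "OPT \<alpha> s P = Inf {cost \<alpha> P \<rho> | \<rho>. feasible s P \<rho>}"

(* An insertion-only dynamic update algorithm: given the source s and the
   sequence of points inserted so far (in order), it outputs the current
   range assignment.  It is online by construction (it only sees the prefix). *)
type_synonym algorithm = "real \<Rightarrow> real list \<Rightarrow> (real \<Rightarrow> real)"

definition valid_insertion_seq :: "real \<Rightarrow> real list \<Rightarrow> bool" where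
  "valid_insertion_seq s xs \<longleftrightarrow> distinct (s # xs)"

definition stable_approx :: "real \<Rightarrow> real \<Rightarrow> algorithm \<Rightarrow> bool" where
  "stable_approx \<alpha> c A \<longleftrightarrow>
     (\<forall>s xs. valid_insertion_seq s xs \<longrightarrow>
        feasible s (insert s (set xs)) (A s xs) \<and>
        cost \<alpha> (insert s (set xs)) (A s xs) \<le> c * OPT \<alpha> s (insert s (set xs))) \<and>
     (\<forall>s xs x. valid_insertion_seq s (xs @ [x]) \<longrightarrow>
        card {p. A s (xs @ [x]) p \<noteq> A s xs p} \<le> 1)"

end

theory Submission
  imports Defs "HOL-Analysis.Convex"
begin

text \<open>Points on either side of the source are handled separately, through their distances to it.
  On one side the points are cut into blocks \<open>[u, v)\<close> between consecutive leaders \<open>u < v\<close>.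
  Only \<open>u\<close>, and possibly one further point \<open>c\<close> of the block, transmit, and both reach exactly
  \<open>v\<close>; a block holds at most three points, or at most two on either side of \<open>c\<close>.  Inserting
  a point into a block changes a single range: if the block has a second transmitter \<open>c\<close>, then
  \<open>c\<close> becomes a leader and \<open>u\<close> shrinks to reach \<open>c\<close>; otherwise a middle point of the
  block starts to transmit to \<open>v\<close>.  By the power mean inequality a block costs at most a constant
  \<open>K\<close> times the sum of the \<open>\<alpha>\<close>-th powers of its gaps (\<open>K = 3 + \<surd>5\<close> for \<open>\<alpha> = 2\<close>).
  Conversely every feasible assignment pays at least the sum of the \<open>\<alpha>\<close>-th powers of the gaps
  on each side of the source: each gap is crossed by an edge, and since \<open>x \<mapsto> x\<^sup>\<alpha>\<close> is
  superadditive, the gaps charged to one transmitter cost no more than its range.  Both sides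
  together give the ratio \<open>2 K\<close>.\<close>

section \<open>Power inequalities\<close>

lemma powr_sum_le_card_powr_sum:
  fixes x :: "'a \<Rightarrow> real"
  assumes "finite S" and pos: "\<And>i. i \<in> S \<Longrightarrow> 0 < x i" and "1 \<le> a"
  shows "(\<Sum>i\<in>S. x i) powr a \<le> card S powr (a - 1) * (\<Sum>i\<in>S. x i powr a)"
proof (cases "S = {}")
  case False
  define n where "n = real (card S)"
  have n: "0 < n" using assms(1) False by (simp add: n_def card_gt_0_iff)
  have "(\<Sum>i\<in>S. (1 / n) *\<^sub>R x i) powr a \<le> (\<Sum>i\<in>S. (1 / n) * x i powr a)"
    using convex_on_sum[OF assms(1) False powr_convex[OF assms(3)], of "\<lambda>_. 1 / n" x] pos n
    by (simp add: n_def)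
  then have "((\<Sum>i\<in>S. x i) / n) powr a \<le> (\<Sum>i\<in>S. x i powr a) / n"
    by (simp add: sum_divide_distrib sum_distrib_left)
  then have "(\<Sum>i\<in>S. x i) powr a / n powr a \<le> (\<Sum>i\<in>S. x i powr a) / n"
    using pos n by (simp add: powr_divide less_imp_le sum_nonneg)
  then have "(\<Sum>i\<in>S. x i) powr a \<le> n powr a / n * (\<Sum>i\<in>S. x i powr a)"
    using n by (simp add: field_simps)
  then show ?thesis
    using n by (simp add: n_def powr_diff)
qed simp

lemma sum_powr_le_powr_sum:
  fixes x :: "'a \<Rightarrow> real"
  assumes "finite S" and nonneg: "\<And>i. i \<in> S \<Longrightarrow> 0 \<le> x i" and "1 \<le> a"
  shows "(\<Sum>i\<in>S. x i powr a) \<le> (\<Sum>i\<in>S. x i) powr a"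
proof -
  define T where "T = (\<Sum>i\<in>S. x i)"
  show ?thesis
  proof (cases "T = 0")
    case True
    then show ?thesis
      using assms by (simp add: T_def sum_nonneg_eq_0_iff)
  next
    case False
    then have T: "0 < T" using nonneg by (simp add: T_def order_le_neq_trans sum_nonneg)
    have "x i powr a \<le> T powr a * (x i / T)" if "i \<in> S" for i
    proof -
      have "x i \<le> T" unfolding T_def using assms(1) nonneg that by (intro member_le_sum) auto
      then have "(x i / T) powr a \<le> (x i / T) powr 1"
        using T nonneg[OF that] assms(3) by (intro powr_mono') auto
      then show ?thesis
        using T nonneg[OF that] by (simp add: powr_divide field_simps)
    qed
    then have "(\<Sum>i\<in>S. x i powr a) \<le> (\<Sum>i\<in>S. T powr a * (x i / T))"
      by (rule sum_mono)
    also have "\<dots> = T powr a"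
      using T by (simp flip: sum_distrib_left sum_divide_distrib add: T_def)
    finally show ?thesis unfolding T_def .
  qed
qed

lemma add_powr_le:
  fixes A C :: real
  assumes "0 < A" "0 < C" "1 \<le> \<alpha>"
  shows "(A + C) powr \<alpha> \<le> 2 powr (\<alpha> - 1) * (A powr \<alpha> + C powr \<alpha>)"
  using powr_sum_le_card_powr_sum[of UNIV "\<lambda>b. if b then A else C" \<alpha>] assms
  by (simp add: UNIV_bool add.commute)

text \<open>\<open>(3 + \<surd>5) / 2\<close> is the largest eigenvalue of the quadratic form \<open>(A + C)\<^sup>2 + C\<^sup>2\<close>.\<close>

lemma golden_ratio_ineq:
  fixes A C :: real
  shows "2 * ((A + C)\<^sup>2 + C\<^sup>2) \<le> (3 + sqrt 5) * (A\<^sup>2 + C\<^sup>2)"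
proof -
  define r where "r = sqrt 5"
  have r2: "r\<^sup>2 = 5" and r: "0 < 1 + r" by (simp_all add: r_def add_pos_nonneg)
  have "(1 + r) * ((3 + r) * (A\<^sup>2 + C\<^sup>2) - 2 * ((A + C)\<^sup>2 + C\<^sup>2)) = ((1 + r) * A - 2 * C)\<^sup>2"
    by (simp add: algebra_simps power2_eq_square flip: r2)
  then have "0 \<le> (1 + r) * ((3 + r) * (A\<^sup>2 + C\<^sup>2) - 2 * ((A + C)\<^sup>2 + C\<^sup>2))"
    by simp
  then show ?thesis
    using r by (simp add: zero_le_mult_iff r_def)
qed

section \<open>Gaps of a finite set of reals\<close>

text \<open>Junk value \<open>Min {}\<close> for \<open>p \<ge> Max D\<close>; gaps are only taken below \<open>Max D\<close>.\<close>

definition next_point :: "real set \<Rightarrow> real \<Rightarrow> real" where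
  "next_point D p = Min {q \<in> D. p < q}"

definition gap_cost :: "real \<Rightarrow> real set \<Rightarrow> real" where
  "gap_cost \<alpha> D = (\<Sum>p\<in>D - {Max D}. (next_point D p - p) powr \<alpha>)"

lemma
  assumes "finite D" "q \<in> D" "p < q"
  shows next_point_in: "next_point D p \<in> D"
    and next_point_gt: "p < next_point D p"
    and next_point_le: "next_point D p \<le> q"
proof -
  have "next_point D p \<in> {q \<in> D. p < q}"
    unfolding next_point_def using assms by (intro Min_in) auto
  then show "next_point D p \<in> D" "p < next_point D p" by auto
  show "next_point D p \<le> q"
    unfolding next_point_def using assms by (intro Min_le) auto
qed

lemma next_point_eqI:
  assumes "finite D" "q \<in> D" "p < q" "D \<inter> {p<..<q} = {}"
  shows "next_point D p = q"
proof (rule antisym)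
  show "next_point D p \<le> q" using assms(1-3) by (rule next_point_le)
  have "next_point D p \<in> D" "p < next_point D p"
    using assms by (auto intro: next_point_in next_point_gt)
  then show "q \<le> next_point D p" using assms(4) by (auto simp: not_less[symmetric])
qed

lemma sum_gaps_telescope:
  assumes "finite D" "a \<in> D" "b \<in> D" "a \<le> b"
  shows "(\<Sum>p\<in>D \<inter> {a..<b}. next_point D p - p) = b - a"
  using assms(3,4)
proof (induction "card (D \<inter> {a..<b})" arbitrary: b rule: less_induct)
  case less
  show ?case
  proof (cases "a = b")
    case False
    define m where "m = Max (D \<inter> {a..<b})"
    have "a \<in> D \<inter> {a..<b}" using assms(2) less.prems False by auto
    then have "m \<in> D \<inter> {a..<b}" unfolding m_def using assms(1) by (intro Max_in) auto
    then have m: "m \<in> D" "a \<le> m" "m < b" by auto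
    have "x \<le> m" if "x \<in> D \<inter> {a..<b}" for x
      using assms(1) that by (simp add: m_def)
    then have above_m: "D \<inter> {m<..<b} = {}"
      using m(2) by force
    have split: "D \<inter> {a..<b} = insert m (D \<inter> {a..<m})"
      using m above_m by (auto simp: not_less)
    have "card (D \<inter> {a..<m}) < card (D \<inter> {a..<b})"
      using assms(1) m by (intro psubset_card_mono) auto
    then have "(\<Sum>p\<in>D \<inter> {a..<m}. next_point D p - p) = m - a"
      using less.hyps m by blast
    moreover have "next_point D m = b"
      using assms(1) less.prems m above_m by (intro next_point_eqI) auto
    ultimately show ?thesis
      using assms(1) by (simp add: split)
  qed simp
qed

lemma sum_Int_atLeastLessThan_split:
  fixes D :: "real set"
  assumes "finite D" "a \<le> c" "c \<le> b"
  shows "(\<Sum>p\<in>D \<inter> {a..<b}. f p) = (\<Sum>p\<in>D \<inter> {a..<c}. f p) + (\<Sum>p\<in>D \<inter> {c..<b}. f p)"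
proof -
  have "D \<inter> {a..<b} = D \<inter> {a..<c} \<union> D \<inter> {c..<b}" using assms(2,3) by auto
  then show ?thesis by (simp only:) (rule sum.union_disjoint, use assms(1) in auto)
qed

lemma sum_gaps_within_le:
  assumes "finite D" "G \<subseteq> D - {Max D}" "lo \<le> hi"
    and within: "\<And>p. p \<in> G \<Longrightarrow> lo \<le> p \<and> next_point D p \<le> hi"
  shows "(\<Sum>p\<in>G. next_point D p - p) \<le> hi - lo"
proof (cases "G = {}")
  case False
  have fin: "finite G" using assms(1,2) finite_subset by blast
  define a b where "a = Min G" and "b = next_point D (Max G)"
  have "Max G \<in> G" "a \<in> G" using fin False by (simp_all add: a_def)
  then have "Max G \<in> D - {Max D}" "a \<in> D" using assms(2) by auto
  then have "Max G < Max D" "Max G \<in> D"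
    using assms(1) by (auto simp: order.not_eq_order_implies_strict)
  moreover have "Max D \<in> D" using assms(1) \<open>a \<in> D\<close> by (intro Max_in) auto
  ultimately have ab: "b \<in> D" "Max G < b"
    unfolding b_def using assms(1) by (auto intro: next_point_in next_point_gt)
  have "G \<subseteq> D \<inter> {a..<b}"
    using fin ab assms(2) by (auto simp: a_def intro: le_less_trans[OF Max_ge])
  then have "(\<Sum>p\<in>G. next_point D p - p) \<le> (\<Sum>p\<in>D \<inter> {a..<b}. next_point D p - p)"
    using assms(1) ab by (intro sum_mono2) (auto intro: less_imp_le next_point_gt[of D b])
  also have "\<dots> = b - a"
    using assms(1) ab \<open>a \<in> D\<close> \<open>Max G \<in> G\<close> fin
    by (intro sum_gaps_telescope) (auto simp: a_def intro: order.trans[OF Min_le])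
  also have "\<dots> \<le> hi - lo"
    using within[OF \<open>a \<in> G\<close>] within[OF \<open>Max G \<in> G\<close>] by (simp add: b_def)
  finally show ?thesis .
qed (use assms in simp)

lemma powr_dist_le_gap_sum:
  fixes n :: real
  assumes "finite D" "a \<in> D" "b \<in> D" "a < b" "card (D \<inter> {a..<b}) \<le> n" "1 \<le> \<alpha>"
  shows "(b - a) powr \<alpha> \<le> n powr (\<alpha> - 1) * (\<Sum>p\<in>D \<inter> {a..<b}. (next_point D p - p) powr \<alpha>)"
proof -
  have gap_pos: "0 < next_point D p - p" if "p \<in> D \<inter> {a..<b}" for p
    using assms(1,3) that next_point_gt by auto
  have "(b - a) powr \<alpha> = (\<Sum>p\<in>D \<inter> {a..<b}. next_point D p - p) powr \<alpha>"
    using assms by (simp add: sum_gaps_telescope)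
  also have "\<dots> \<le> card (D \<inter> {a..<b}) powr (\<alpha> - 1) * (\<Sum>p\<in>D \<inter> {a..<b}. (next_point D p - p) powr \<alpha>)"
    using assms(1,6) gap_pos by (intro powr_sum_le_card_powr_sum) auto
  also have "\<dots> \<le> n powr (\<alpha> - 1) * (\<Sum>p\<in>D \<inter> {a..<b}. (next_point D p - p) powr \<alpha>)"
    using assms(5,6) by (intro mult_right_mono powr_mono2 sum_nonneg) auto
  finally show ?thesis .
qed

section \<open>Blocks\<close>

text \<open>The two conditions bound the two shapes of blocks: one transmitter over at most three
  points, and two transmitters \<open>u < c\<close> reaching the same \<open>t\<close>, with at most two points on
  either side of \<open>c\<close> (\<open>A = c - u\<close>, \<open>C = t - c\<close>).\<close>

definition admissible_block_factor :: "real \<Rightarrow> real \<Rightarrow> bool" where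
  "admissible_block_factor \<alpha> K \<longleftrightarrow> 3 powr (\<alpha> - 1) \<le> K \<and>
     (\<forall>A C. 0 < A \<longrightarrow> 0 < C \<longrightarrow>
        2 powr (\<alpha> - 1) * ((A + C) powr \<alpha> + C powr \<alpha>) \<le> K * (A powr \<alpha> + C powr \<alpha>))"

lemma admissible_block_factor_nonneg: "admissible_block_factor \<alpha> K \<Longrightarrow> 0 \<le> K"
  unfolding admissible_block_factor_def by (meson order.trans powr_ge_zero)

lemma admissible_block_factor_4_powr:
  assumes "1 \<le> \<alpha>"
  shows "admissible_block_factor \<alpha> (4 powr \<alpha>)"
  unfolding admissible_block_factor_def
proof (intro conjI allI impI)
  have "3 powr (\<alpha> - 1) \<le> 4 powr (\<alpha> - 1)" using assms by (intro powr_mono2) auto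
  also have "\<dots> \<le> 4 powr \<alpha>" by (intro powr_mono) auto
  finally show "3 powr (\<alpha> - 1) \<le> 4 powr \<alpha>" .
next
  fix A C :: real assume AC: "0 < A" "0 < C"
  have "C powr \<alpha> \<le> (A + C) powr \<alpha>" using AC assms by (intro powr_mono2) auto
  then have "(A + C) powr \<alpha> + C powr \<alpha> \<le> 2 * (2 powr (\<alpha> - 1) * (A powr \<alpha> + C powr \<alpha>))"
    using add_powr_le[OF AC assms] by linarith
  then have "2 powr (\<alpha> - 1) * ((A + C) powr \<alpha> + C powr \<alpha>)
      \<le> 2 powr (\<alpha> - 1) * (2 * (2 powr (\<alpha> - 1) * (A powr \<alpha> + C powr \<alpha>)))"
    by (intro mult_left_mono) auto
  also have "\<dots> = 2 powr (2 * \<alpha> - 1) * (A powr \<alpha> + C powr \<alpha>)"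
    by (simp add: powr_add[symmetric] powr_diff)
  also have "\<dots> \<le> 4 powr \<alpha> * (A powr \<alpha> + C powr \<alpha>)"
  proof (intro mult_right_mono)
    have "2 powr (2 * \<alpha> - 1) \<le> 2 powr (2 * \<alpha>)" by (intro powr_mono) auto
    also have "\<dots> = 4 powr \<alpha>" by (simp add: powr_powr[symmetric])
    finally show "2 powr (2 * \<alpha> - 1) \<le> 4 powr \<alpha>" .
  qed auto
  finally show "2 powr (\<alpha> - 1) * ((A + C) powr \<alpha> + C powr \<alpha>) \<le> 4 powr \<alpha> * (A powr \<alpha> + C powr \<alpha>)" .
qed

lemma admissible_block_factor_golden: "admissible_block_factor 2 (3 + sqrt 5)"
  using golden_ratio_ineq by (simp add: admissible_block_factor_def powr_numeral add_pos_nonneg)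

definition good_block :: "real set \<Rightarrow> (real \<Rightarrow> real) \<Rightarrow> real \<Rightarrow> bool" where
  "good_block D t u \<longleftrightarrow>
     (\<forall>p\<in>D \<inter> {u<..<t u}. t p = p) \<and> card (D \<inter> {u..<t u}) \<le> 3 \<or>
     (\<exists>c\<in>D \<inter> {u<..<t u}. t c = t u \<and> (\<forall>p\<in>D \<inter> {u<..<t u} - {c}. t p = p) \<and>
        card (D \<inter> {u..<c}) \<le> 2 \<and> card (D \<inter> {c..<t u}) \<le> 2)"

lemma good_blockE [consumes 1, case_names single shared]:
  assumes "good_block D t u"
  obtains "\<forall>p\<in>D \<inter> {u<..<t u}. t p = p" "card (D \<inter> {u..<t u}) \<le> 3"
    | c where "c \<in> D \<inter> {u<..<t u}" "t c = t u" "\<forall>p\<in>D \<inter> {u<..<t u} - {c}. t p = p"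
        "card (D \<inter> {u..<c}) \<le> 2" "card (D \<inter> {c..<t u}) \<le> 2"
  using assms unfolding good_block_def by blast

lemma good_block_singleI:
  "\<forall>p\<in>D \<inter> {u<..<t u}. t p = p \<Longrightarrow> card (D \<inter> {u..<t u}) \<le> 3 \<Longrightarrow> good_block D t u"
  unfolding good_block_def by blast

lemma good_block_target:
  assumes "good_block D t u" "p \<in> D \<inter> {u<..<t u}"
  shows "t p = p \<or> t p = t u"
  using assms unfolding good_block_def by blast

lemma card_insert_Int_le: "finite D \<Longrightarrow> card (insert x D \<inter> I) \<le> card (D \<inter> I) + 1"
  by (simp add: Int_insert_left card_insert_if)

lemma sum_range_powr_single:
  assumes "finite B" "v \<in> B" "B - {v} \<subseteq> F" "\<forall>p\<in>F. t p = p"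
  shows "(\<Sum>p\<in>B. (t p - p) powr \<alpha>) = (t v - v) powr \<alpha>"
proof -
  have "\<forall>p\<in>B - {v}. (t p - p) powr \<alpha> = 0" using assms(3,4) by auto
  then show ?thesis using sum.mono_neutral_right[of B "{v}" "\<lambda>p. (t p - p) powr \<alpha>"] assms(1,2) by auto
qed

lemma shared_block_cost_le:
  assumes "finite D" "a \<in> D" "c \<in> D" "b \<in> D" "a < c" "c < b"
    and "card (D \<inter> {a..<c}) \<le> 2" "card (D \<inter> {c..<b}) \<le> 2"
    and "1 \<le> \<alpha>" "admissible_block_factor \<alpha> K"
  shows "(b - a) powr \<alpha> + (b - c) powr \<alpha> \<le> K * (\<Sum>p\<in>D \<inter> {a..<b}. (next_point D p - p) powr \<alpha>)"
proof -
  let ?gaps = "\<lambda>B. \<Sum>p\<in>B. (next_point D p - p) powr \<alpha>"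
  have gaps: "?gaps (D \<inter> {a..<b}) = ?gaps (D \<inter> {a..<c}) + ?gaps (D \<inter> {c..<b})"
    using assms(1,5,6) by (intro sum_Int_atLeastLessThan_split) auto
  have "0 < c - a" "0 < b - c" using assms(5,6) by simp_all
  then have "2 powr (\<alpha> - 1) * (((c - a) + (b - c)) powr \<alpha> + (b - c) powr \<alpha>)
      \<le> K * ((c - a) powr \<alpha> + (b - c) powr \<alpha>)"
    using assms(10) unfolding admissible_block_factor_def by blast
  then have "2 powr (\<alpha> - 1) * ((b - a) powr \<alpha> + (b - c) powr \<alpha>) \<le> K * ((c - a) powr \<alpha> + (b - c) powr \<alpha>)"
    by simp
  also have "\<dots> \<le> K * (2 powr (\<alpha> - 1) * ?gaps (D \<inter> {a..<c}) + 2 powr (\<alpha> - 1) * ?gaps (D \<inter> {c..<b}))"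
    using assms admissible_block_factor_nonneg
    by (intro mult_left_mono add_mono powr_dist_le_gap_sum) auto
  also have "\<dots> = 2 powr (\<alpha> - 1) * (K * ?gaps (D \<inter> {a..<b}))"
    by (simp add: gaps algebra_simps)
  finally show ?thesis by simp
qed

lemma good_block_cost_le:
  assumes "finite D" "u \<in> D" "t u \<in> D" "u < t u" "good_block D t u"
    and "1 \<le> \<alpha>" "admissible_block_factor \<alpha> K"
  shows "(\<Sum>p\<in>D \<inter> {u..<t u}. (t p - p) powr \<alpha>)
           \<le> K * (\<Sum>p\<in>D \<inter> {u..<t u}. (next_point D p - p) powr \<alpha>)"
  using assms(5)
proof (cases rule: good_blockE)
  case single
  have "(\<Sum>p\<in>D \<inter> {u..<t u}. (t p - p) powr \<alpha>) = (t u - u) powr \<alpha>"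
    by (rule sum_range_powr_single[OF _ _ _ single(1)]) (use assms(1,2,4) in auto)
  also have "\<dots> \<le> 3 powr (\<alpha> - 1) * (\<Sum>p\<in>D \<inter> {u..<t u}. (next_point D p - p) powr \<alpha>)"
    using assms(1-4,6) single(2) by (intro powr_dist_le_gap_sum) auto
  also have "\<dots> \<le> K * (\<Sum>p\<in>D \<inter> {u..<t u}. (next_point D p - p) powr \<alpha>)"
    using assms(7) unfolding admissible_block_factor_def by (intro mult_right_mono sum_nonneg) auto
  finally show ?thesis .
next
  case (shared c)
  from shared(1) have c: "c \<in> D" "u < c" "c < t u" by auto
  have "(\<Sum>p\<in>D \<inter> {u..<c}. (t p - p) powr \<alpha>) = (t u - u) powr \<alpha>"
    by (rule sum_range_powr_single[OF _ _ _ shared(3)]) (use assms(1,2) c in auto)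
  moreover have "(\<Sum>p\<in>D \<inter> {c..<t u}. (t p - p) powr \<alpha>) = (t c - c) powr \<alpha>"
    by (rule sum_range_powr_single[OF _ _ _ shared(3)]) (use assms(1) c in auto)
  moreover have "(\<Sum>p\<in>D \<inter> {u..<t u}. (t p - p) powr \<alpha>)
      = (\<Sum>p\<in>D \<inter> {u..<c}. (t p - p) powr \<alpha>) + (\<Sum>p\<in>D \<inter> {c..<t u}. (t p - p) powr \<alpha>)"
    using assms(1) c by (intro sum_Int_atLeastLessThan_split) auto
  ultimately have "(\<Sum>p\<in>D \<inter> {u..<t u}. (t p - p) powr \<alpha>) = (t u - u) powr \<alpha> + (t u - c) powr \<alpha>"
    using shared(2) by simp
  also have "\<dots> \<le> K * (\<Sum>p\<in>D \<inter> {u..<t u}. (next_point D p - p) powr \<alpha>)"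
    using assms c shared(4,5) by (intro shared_block_cost_le) auto
  finally show ?thesis .
qed

lemma good_block_transfer:
  assumes "good_block D t u" "u < t u"
    and same_points: "D' \<inter> {u..<t u} = D \<inter> {u..<t u}"
    and same_targets: "\<And>p. p \<in> {u..<t u} \<Longrightarrow> t' p = t p"
  shows "good_block D' t' u"
proof -
  have tu: "t' u = t u" using assms(2) same_targets by simp
  have same: "D' \<inter> I = D \<inter> I" if "I \<subseteq> {u..<t u}" for I
    using same_points that by blast
  have inner: "D' \<inter> {u<..<t u} = D \<inter> {u<..<t u}" by (rule same) auto
  have fixed: "\<forall>p\<in>D' \<inter> {u<..<t u} - C. t' p = p" if "\<forall>p\<in>D \<inter> {u<..<t u} - C. t p = p" for C
  proof
    fix p assume p: "p \<in> D' \<inter> {u<..<t u} - C"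
    then have "t p = p" using that inner by blast
    moreover have "p \<in> {u..<t u}" using p by simp
    ultimately show "t' p = p" using same_targets by simp
  qed
  from assms(1) show ?thesis
  proof (cases rule: good_blockE)
    case single
    have "\<forall>p\<in>D' \<inter> {u<..<t u}. t' p = p" using fixed[of "{}"] single(1) by (metis Diff_empty)
    then show ?thesis using single(2) unfolding good_block_def tu same_points by blast
  next
    case (shared c)
    have "D' \<inter> {u..<c} = D \<inter> {u..<c}" "D' \<inter> {c..<t u} = D \<inter> {c..<t u}"
      using shared(1) by (auto intro!: same)
    moreover have "c \<in> D' \<inter> {u<..<t u}" using shared(1) inner by blast
    moreover have "t' c = t u" using shared(1,2) same_targets[of c] by simp
    moreover have "\<forall>p\<in>D' \<inter> {u<..<t u} - {c}. t' p = p" using fixed shared(3) by blast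
    ultimately show ?thesis
      using shared(4,5) unfolding good_block_def tu by (intro disjI2 bexI[of _ c]) auto
  qed
qed

definition split_point :: "real set \<Rightarrow> real \<Rightarrow> real \<Rightarrow> real" where
  "split_point D u t = Max {p \<in> D \<inter> {u<..<t}. card (D \<inter> {u<..<p}) \<le> 1}"

lemma split_point_bounds:
  assumes "finite D" "u \<in> D" "D \<inter> {u<..<t} \<noteq> {}" "card (D \<inter> {u<..<t}) \<le> 3"
  defines "c \<equiv> split_point D u t"
  shows "c \<in> D \<inter> {u<..<t}" "card (D \<inter> {u..<c}) \<le> 2" "card (D \<inter> {c..<t}) \<le> 2"
proof -
  let ?S = "{p \<in> D \<inter> {u<..<t}. card (D \<inter> {u<..<p}) \<le> 1}"
  have finite_S: "finite ?S" using assms(1) by simp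
  define m where "m = Min (D \<inter> {u<..<t})"
  have m: "m \<in> D \<inter> {u<..<t}" unfolding m_def using assms(1,3) by (intro Min_in) auto
  have "m \<le> q" if "q \<in> D \<inter> {u<..<t}" for q
    unfolding m_def using assms(1) that by simp
  with m have "D \<inter> {u<..<m} = {}" by force
  with m have "m \<in> ?S" by simp
  then have c: "c \<in> ?S" unfolding c_def split_point_def using finite_S by (intro Max_in) auto
  then show "c \<in> D \<inter> {u<..<t}" by simp
  have "D \<inter> {u..<c} = insert u (D \<inter> {u<..<c})" using assms(2) c by auto
  then show "card (D \<inter> {u..<c}) \<le> 2" using c assms(1) by (simp add: card_insert_if)
  show "card (D \<inter> {c..<t}) \<le> 2"
  proof (rule ccontr)
    assume "\<not> card (D \<inter> {c..<t}) \<le> 2"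
    moreover have "D \<inter> {c..<t} = insert c (D \<inter> {c<..<t})" using c by auto
    ultimately have "\<not> card (D \<inter> {c<..<t}) \<le> Suc 0" using assms(1) by (simp add: card_insert_if)
    then obtain q1 q2 where q: "q1 \<in> D \<inter> {c<..<t}" "q2 \<in> D \<inter> {c<..<t}" "q1 < q2"
      using assms(1) by (auto simp: card_le_Suc0_iff_eq neq_iff)
    have "D \<inter> {u<..<q1} \<subseteq> D \<inter> {u<..<t} - {q1, q2}" using q c by auto
    then have "card (D \<inter> {u<..<q1}) \<le> card (D \<inter> {u<..<t} - {q1, q2})"
      using assms(1) by (intro card_mono) auto
    also have "\<dots> = card (D \<inter> {u<..<t}) - 2"
      using assms(1) q c by (subst card_Diff_subset) auto
    finally have "q1 \<in> ?S" using q c assms(4) by auto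
    then have "q1 \<le> c" unfolding c_def split_point_def using finite_S by (intro Max_ge)
    then show False using q by simp
  qed
qed

section \<open>The one-sided algorithm\<close>

text \<open>\<open>D\<close> holds the distances to the source \<open>0\<close> on one side; the point \<open>p\<close> transmits
  up to \<open>t p\<close>, i.e. has range \<open>t p - p\<close>.\<close>

locale block_structure =
  fixes D L :: "real set" and t :: "real \<Rightarrow> real"
  assumes finite_points: "finite D"
    and points_nonneg: "D \<subseteq> {0..}"
    and zero_leader: "0 \<in> L"
    and leaders_points: "L \<subseteq> D"
    and max_leader: "Max D \<in> L"
    and target_outside: "\<And>p. p \<notin> D \<Longrightarrow> t p = p"
    and target_max: "t (Max D) = Max D"
    and target_gt: "\<And>u. u \<in> L \<Longrightarrow> u \<noteq> Max D \<Longrightarrow> u < t u"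
    and target_leader: "\<And>u. u \<in> L \<Longrightarrow> u \<noteq> Max D \<Longrightarrow> t u \<in> L"
    and next_leader: "\<And>u. u \<in> L \<Longrightarrow> u \<noteq> Max D \<Longrightarrow> L \<inter> {u<..<t u} = {}"
    and good_blocks: "\<And>u. u \<in> L \<Longrightarrow> u \<noteq> Max D \<Longrightarrow> good_block D t u"
begin

lemma zero_point: "0 \<in> D"
  using zero_leader leaders_points by blast

lemma max_point: "Max D \<in> D"
  using finite_points zero_point by (intro Max_in) auto

lemma le_max: "p \<in> D \<Longrightarrow> p \<le> Max D"
  using finite_points by simp

lemma finite_leaders: "finite L"
  using finite_points leaders_points by (rule finite_subset[rotated])

lemma target_point: "u \<in> L \<Longrightarrow> u \<noteq> Max D \<Longrightarrow> t u \<in> D"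
  using target_leader leaders_points by blast

lemma target_le_leader:
  assumes "u \<in> L" "u \<noteq> Max D" "w \<in> L" "u < w"
  shows "t u \<le> w"
  using next_leader[OF assms(1,2)] assms(3,4) by (auto simp: not_less[symmetric])

lemma blocks_disjoint:
  assumes "u \<in> L" "u \<noteq> Max D" "w \<in> L" "w \<noteq> Max D" "u \<noteq> w"
  shows "{u..<t u} \<inter> {w..<t w} = {}"
  using target_le_leader[OF assms(1-3)] target_le_leader[OF assms(3,4,1)] assms(5)
  by (cases "u < w") auto

lemma leader_below:
  assumes "0 < q" "q \<le> Max D"
  defines "u \<equiv> Max (L \<inter> {..<q})"
  shows "u \<in> L" "u \<noteq> Max D" "u < q" "q \<le> t u"
proof -
  have "u \<in> L \<inter> {..<q}"
    unfolding u_def using finite_leaders zero_leader assms(1) by (intro Max_in) auto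
  then show "u \<in> L" "u < q" by auto
  then show "u \<noteq> Max D" using assms(2) by auto
  have "\<not> t u < q"
  proof
    assume "t u < q"
    then have "t u \<in> L \<inter> {..<q}"
      using target_leader[OF \<open>u \<in> L\<close> \<open>u \<noteq> Max D\<close>] by simp
    then have "t u \<le> u"
      unfolding u_def using finite_leaders by (intro Max_ge) auto
    then show False using target_gt[OF \<open>u \<in> L\<close> \<open>u \<noteq> Max D\<close>] by simp
  qed
  then show "q \<le> t u" by simp
qed

lemma block_of:
  assumes "p \<in> D - L"
  obtains u where "u \<in> L" "u \<noteq> Max D" "p \<in> {u<..<t u}"
proof -
  have "0 < p" "p \<le> Max D"
    using assms points_nonneg zero_leader le_max by (auto simp: order.order_iff_strict)
  note below = leader_below[OF this]
  then have "p \<noteq> t (Max (L \<inter> {..<p}))" using assms target_leader[OF below(1,2)] by auto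
  with below show ?thesis using that by auto
qed

lemma target_ge: "p \<le> t p"
proof (cases "p \<in> D - L")
  case True
  then obtain u where u: "u \<in> L" "u \<noteq> Max D" "p \<in> {u<..<t u}" by (rule block_of)
  then show ?thesis
    using good_block_target[OF good_blocks[OF u(1,2)], of p] True by force
next
  case False
  then show ?thesis
    using target_outside target_max target_gt by (cases "p \<in> D \<and> p \<noteq> Max D") (auto intro: less_imp_le)
qed

lemma cover:
  assumes "q \<in> D" "0 < q"
  shows "\<exists>v\<in>D. v < q \<and> q \<le> t v"
  using leader_below[OF assms(2) le_max[OF assms(1)]] leaders_points by blast

lemma blocks_partition: "D - {Max D} = (\<Union>u\<in>L - {Max D}. D \<inter> {u..<t u})"
proof
  show "D - {Max D} \<subseteq> (\<Union>u\<in>L - {Max D}. D \<inter> {u..<t u})"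
  proof
    fix p assume p: "p \<in> D - {Max D}"
    show "p \<in> (\<Union>u\<in>L - {Max D}. D \<inter> {u..<t u})"
    proof (cases "p \<in> L")
      case True
      then show ?thesis using p target_gt by auto
    next
      case False
      then obtain u where "u \<in> L" "u \<noteq> Max D" "p \<in> {u<..<t u}" using p block_of[of p] by blast
      then show ?thesis using p by (auto intro!: bexI[of _ u])
    qed
  qed
  show "(\<Union>u\<in>L - {Max D}. D \<inter> {u..<t u}) \<subseteq> D - {Max D}"
    using target_point le_max by fastforce
qed

lemma sum_blocks:
  "(\<Sum>p\<in>D - {Max D}. f p) = (\<Sum>u\<in>L - {Max D}. \<Sum>p\<in>D \<inter> {u..<t u}. f p)"
proof -
  have "D \<inter> {u..<t u} \<inter> (D \<inter> {w..<t w}) = {}" if "u \<in> L - {Max D}" "w \<in> L - {Max D}" "u \<noteq> w" for u w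
    using blocks_disjoint[of u w] that by blast
  then show ?thesis
    unfolding blocks_partition using finite_leaders finite_points by (intro sum.UNION_disjoint) auto
qed

lemma cost_le:
  assumes "1 \<le> \<alpha>" "admissible_block_factor \<alpha> K"
  shows "(\<Sum>p\<in>D. (t p - p) powr \<alpha>) \<le> K * gap_cost \<alpha> D"
proof -
  have "(\<Sum>p\<in>D. (t p - p) powr \<alpha>) = (\<Sum>p\<in>D - {Max D}. (t p - p) powr \<alpha>)"
    using finite_points max_point target_max by (simp add: sum.remove)
  also have "\<dots> = (\<Sum>u\<in>L - {Max D}. \<Sum>p\<in>D \<inter> {u..<t u}. (t p - p) powr \<alpha>)"
    by (rule sum_blocks)
  also have "\<dots> \<le> (\<Sum>u\<in>L - {Max D}. K * (\<Sum>p\<in>D \<inter> {u..<t u}. (next_point D p - p) powr \<alpha>))"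
    using leaders_points finite_points target_point target_gt good_blocks assms
    by (intro sum_mono good_block_cost_le) auto
  also have "\<dots> = K * gap_cost \<alpha> D"
    by (simp add: gap_cost_def sum_blocks sum_distrib_left)
  finally show ?thesis .
qed

lemma append_max:
  assumes "Max D < x"
  shows "block_structure (insert x D) (insert x L) (t(Max D := x))"
proof -
  let ?m = "Max D" and ?t = "t(Max D := x)"
  have max_eq: "Max (insert x D) = x"
    using finite_points zero_point assms by (subst Max_insert) (auto simp: max_def)
  have x_new: "x \<notin> D" using assms le_max by force
  have leader: "w < ?t w \<and> ?t w \<in> insert x L \<and> insert x L \<inter> {w<..<?t w} = {} \<and>
      good_block (insert x D) ?t w" if "w \<in> L" for w
  proof (cases "w = ?m")
    case True
    have "insert x D \<inter> {?m<..<x} = {}" "insert x D \<inter> {?m..<x} = {?m}"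
      using le_max max_point assms by force+
    moreover have "L \<inter> {?m<..<x} = {}" using leaders_points le_max by force
    ultimately show ?thesis using True assms by (simp add: good_block_def)
  next
    case False
    have "t w \<le> ?m" using target_point[OF that False] le_max by blast
    moreover have "good_block (insert x D) ?t w"
      using good_blocks[OF that False] target_gt[OF that False]
      by (rule good_block_transfer) (use \<open>t w \<le> ?m\<close> assms in auto)
    ultimately show ?thesis
      using that False assms target_gt target_leader next_leader by auto
  qed
  show ?thesis
  proof (rule block_structure.intro, unfold max_eq)
    show "?t p = p" if "p \<notin> insert x D" for p
      using that max_point target_outside by auto
  qed (use finite_points points_nonneg zero_leader leaders_points x_new target_outside leader
         le_max[OF zero_point] assms in auto)
qed

lemma update_inside_block:
  assumes u: "u \<in> L" "u \<noteq> Max D" and x: "x \<in> {u<..<t u}"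
    and new_leaders: "L \<subseteq> L'" "L' \<subseteq> insert x D" "L' - L \<subseteq> {u<..<t u}"
    and outside: "\<And>p. p \<notin> {u..<t u} \<Longrightarrow> t' p = t p"
    and fixed: "\<And>p. p \<in> {u..<t u} \<Longrightarrow> p \<notin> insert x D \<Longrightarrow> t' p = p"
    and inside: "\<And>w. w \<in> L' \<inter> {u..<t u} \<Longrightarrow>
      w < t' w \<and> t' w \<in> L' \<and> L' \<inter> {w<..<t' w} = {} \<and> good_block (insert x D) t' w"
  shows "block_structure (insert x D) L' t'"
proof -
  have "t u \<le> Max D" using target_point[OF u] le_max by blast
  then have max_eq: "Max (insert x D) = Max D"
    using finite_points zero_point x by (subst Max_insert) (auto simp: max_def)
  have other: "w < t' w \<and> t' w \<in> L' \<and> L' \<inter> {w<..<t' w} = {} \<and> good_block (insert x D) t' w"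
    if w: "w \<in> L'" "w \<noteq> Max D" "w \<notin> {u..<t u}" for w
  proof -
    have "w \<in> L" "w \<noteq> u" using w new_leaders(3) target_gt[OF u] by auto
    then have disjoint: "{w..<t w} \<inter> {u..<t u} = {}" using blocks_disjoint u w(2) by blast
    then have "t' p = t p" if "p \<in> {w..<t w}" for p using that outside by blast
    moreover have "insert x D \<inter> {w..<t w} = D \<inter> {w..<t w}" using disjoint x by auto
    moreover have "L' \<inter> {w<..<t w} = {}"
      using next_leader[OF \<open>w \<in> L\<close> w(2)] new_leaders(3) disjoint by auto
    ultimately show ?thesis
      using target_gt target_leader good_blocks good_block_transfer new_leaders(1) \<open>w \<in> L\<close> w(2)
      by (metis atLeastLessThan_iff less_eq_real_def subsetD)
  qed
  have leader: "w < t' w \<and> t' w \<in> L' \<and> L' \<inter> {w<..<t' w} = {} \<and> good_block (insert x D) t' w"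
    if "w \<in> L'" "w \<noteq> Max D" for w
    using inside[of w] other[of w] that by blast
  show ?thesis
  proof (rule block_structure.intro, unfold max_eq)
    show "t' p = p" if "p \<notin> insert x D" for p
      using that fixed[of p] outside[of p] target_outside[of p] by (cases "p \<in> {u..<t u}") auto
    show "t' (Max D) = Max D"
      using outside \<open>t u \<le> Max D\<close> target_max by auto
    show "insert x D \<subseteq> {0..}"
      using points_nonneg x leaders_points zero_point u by force
  qed (use finite_points zero_leader max_leader new_leaders leader in auto)
qed

lemma split_shared_block:
  assumes u: "u \<in> L" "u \<noteq> Max D" and x: "x \<in> {u<..<t u}" "x \<notin> D"
    and c: "c \<in> D \<inter> {u<..<t u}" "t c \<noteq> c"
  shows "block_structure (insert x D) (insert c L) (t(u := c))"
proof -
  let ?t = "t(u := c)"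
  from good_blocks[OF u] obtain c' where c': "c' \<in> D \<inter> {u<..<t u}" "t c' = t u"
      "\<forall>p\<in>D \<inter> {u<..<t u} - {c'}. t p = p" "card (D \<inter> {u..<c'}) \<le> 2" "card (D \<inter> {c'..<t u}) \<le> 2"
    by (cases rule: good_blockE) (use c in blast)+
  have "c' = c" using c c'(3) by blast
  then have tc: "t c = t u" and card: "card (D \<inter> {u..<c}) \<le> 2" "card (D \<inter> {c..<t u}) \<le> 2"
    using c'(2,4,5) by simp_all
  have "t p = p" if "p \<in> D \<inter> {u<..<t u}" "p \<noteq> c" for p
    using that c'(3) \<open>c' = c\<close> by blast
  then have fixed: "?t p = p" if "p \<in> insert x D \<inter> {u<..<t u}" "p \<noteq> c" for p
    using that target_outside[of p] x(2) by (cases "p = x") auto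
  have block_leaders: "L \<inter> {u..<t u} = {u}" using next_leader[OF u] u target_gt[OF u] by auto
  show ?thesis
  proof (rule update_inside_block[OF u x(1)])
    show "L \<subseteq> insert c L" "insert c L \<subseteq> insert x D" "insert c L - L \<subseteq> {u<..<t u}"
      using c leaders_points by auto
    show "?t p = t p" if "p \<notin> {u..<t u}" for p
      using that target_gt[OF u] by auto
    show "?t p = p" if "p \<in> {u..<t u}" "p \<notin> insert x D" for p
      using that u leaders_points target_outside by auto
    fix w assume "w \<in> insert c L \<inter> {u..<t u}"
    then consider "w = u" | "w = c" using block_leaders by blast
    then show "w < ?t w \<and> ?t w \<in> insert c L \<and> insert c L \<inter> {w<..<?t w} = {} \<and>
        good_block (insert x D) ?t w"
    proof cases
      case 1
      have "\<forall>p\<in>insert x D \<inter> {u<..<c}. ?t p = p" using fixed c by auto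
      moreover have "card (insert x D \<inter> {u..<c}) \<le> 3"
        using card(1) card_insert_Int_le[OF finite_points, of x "{u..<c}"] by simp
      ultimately have "good_block (insert x D) ?t u" by (intro good_block_singleI) simp_all
      moreover have "insert c L \<inter> {u<..<c} = {}" using next_leader[OF u] c by auto
      ultimately show ?thesis using 1 c by simp
    next
      case 2
      have "?t c = t u" using c tc by auto
      have "\<forall>p\<in>insert x D \<inter> {c<..<t u}. ?t p = p" using fixed c by auto
      moreover have "card (insert x D \<inter> {c..<t u}) \<le> 3"
        using card(2) card_insert_Int_le[OF finite_points, of x "{c..<t u}"] by simp
      ultimately have "good_block (insert x D) ?t c"
        using \<open>?t c = t u\<close> by (intro good_block_singleI) simp_all
      moreover have "insert c L \<inter> {c<..<t u} = {}" using next_leader[OF u] c by auto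
      ultimately show ?thesis using 2 c target_leader[OF u] \<open>?t c = t u\<close> by simp
    qed
  qed
qed

lemma split_single_block:
  assumes u: "u \<in> L" "u \<noteq> Max D" and x: "x \<in> {u<..<t u}" "x \<notin> D"
    and fixed: "\<forall>p\<in>D \<inter> {u<..<t u}. t p = p"
  defines "c \<equiv> split_point (insert x D) u (t u)"
  shows "block_structure (insert x D) L (t(c := t u))"
proof -
  have "\<not> (\<exists>c\<in>D \<inter> {u<..<t u}. t c = t u)" using fixed by (metis IntE greaterThanLessThan_iff less_irrefl)
  then have "card (D \<inter> {u..<t u}) \<le> 3"
    using good_blocks[OF u] unfolding good_block_def by blast
  moreover have "D \<inter> {u..<t u} = insert u (D \<inter> {u<..<t u})"
    using u leaders_points target_gt[OF u] by auto
  moreover have "insert x D \<inter> {u<..<t u} = insert x (D \<inter> {u<..<t u})" using x by auto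
  ultimately have card3: "card (insert x D \<inter> {u<..<t u}) \<le> 3"
    using finite_points x(2) by (simp add: card_insert_if)
  have "finite (insert x D)" "u \<in> insert x D" "insert x D \<inter> {u<..<t u} \<noteq> {}"
    using finite_points u leaders_points x(1) by auto
  note split = split_point_bounds[OF this card3, folded c_def]
  have c: "c \<in> insert x D \<inter> {u<..<t u}"
      and card: "card (insert x D \<inter> {u..<c}) \<le> 2" "card (insert x D \<inter> {c..<t u}) \<le> 2"
    by (fact split)+
  have block_leaders: "L \<inter> {u..<t u} = {u}" using next_leader[OF u] u target_gt[OF u] by auto
  let ?t = "t(c := t u)"
  show ?thesis
  proof (rule update_inside_block[OF u x(1)])
    show "?t p = t p" if "p \<notin> {u..<t u}" for p
      using that c by auto
    show "?t p = p" if "p \<in> {u..<t u}" "p \<notin> insert x D" for p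
      using that c target_outside by auto
    fix w assume "w \<in> L \<inter> {u..<t u}"
    then have "w = u" using block_leaders by blast
    have "?t p = p" if "p \<in> insert x D \<inter> {u<..<t u}" "p \<noteq> c" for p
      using that fixed[rule_format, of p] target_outside[of p] x(2) by (cases "p = x") auto
    then have fixed': "\<forall>p\<in>insert x D \<inter> {u<..<t u} - {c}. ?t p = p" by blast
    have tu: "?t u = t u" using c by auto
    have "good_block (insert x D) ?t u"
      unfolding good_block_def tu
    proof (intro disjI2 bexI[of _ c] conjI)
      show "?t c = t u" by simp
    qed (use c card fixed' in blast)+
    then show "w < ?t w \<and> ?t w \<in> L \<and> L \<inter> {w<..<?t w} = {} \<and> good_block (insert x D) ?t w"
      using \<open>w = u\<close> c u target_gt target_leader next_leader by auto
  qed (use leaders_points in auto)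
qed

end

type_synonym side_state = "real set \<times> real set \<times> (real \<Rightarrow> real)"

fun insert_point :: "real \<Rightarrow> side_state \<Rightarrow> side_state" where
  "insert_point x (D, L, t) =
     (if Max D < x then (insert x D, insert x L, t(Max D := x))
      else let u = Max (L \<inter> {..<x}); T = {c \<in> D \<inter> {u<..<t u}. t c \<noteq> c} in
        if T = {} then (insert x D, L, t(split_point (insert x D) u (t u) := t u))
        else (insert x D, insert (Max T) L, t(u := Max T)))"

lemma (in block_structure) insert_point:
  assumes "x \<notin> D" "0 < x"
  shows "\<exists>L' t'. insert_point x (D, L, t) = (insert x D, L', t') \<and> block_structure (insert x D) L' t'"
proof (cases "Max D < x")
  case True
  then show ?thesis using append_max by simp
next
  case False
  define u where "u = Max (L \<inter> {..<x})"
  define T where "T = {c \<in> D \<inter> {u<..<t u}. t c \<noteq> c}"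
  have below: "u \<in> L" "u \<noteq> Max D" "u < x" "x \<le> t u"
    using leader_below[OF assms(2)] False unfolding u_def by auto
  moreover have "x \<noteq> t u" using assms(1) target_point[OF below(1,2)] by auto
  ultimately have u: "u \<in> L" "u \<noteq> Max D" "x \<in> {u<..<t u}" by auto
  show ?thesis
  proof (cases "T = {}")
    case True
    then have "\<forall>p\<in>D \<inter> {u<..<t u}. t p = p" unfolding T_def by blast
    moreover have "insert_point x (D, L, t) = (insert x D, L, t(split_point (insert x D) u (t u) := t u))"
      unfolding insert_point.simps Let_def u_def[symmetric] T_def[symmetric]
      using \<open>\<not> Max D < x\<close> True by simp
    ultimately show ?thesis using split_single_block[OF u assms(1)] by blast
  next
    case False
    then have "Max T \<in> T" using finite_points by (intro Max_in) (auto simp: T_def)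
    moreover have "insert_point x (D, L, t) = (insert x D, insert (Max T) L, t(u := Max T))"
      unfolding insert_point.simps Let_def u_def[symmetric] T_def[symmetric]
      using \<open>\<not> Max D < x\<close> False by simp
    ultimately show ?thesis using split_shared_block[OF u assms(1), of "Max T"] by (auto simp: T_def)
  qed
qed

lemma insert_point_target: "\<exists>q v. snd (snd (insert_point x st)) = (snd (snd st))(q := v)"
  by (cases st) (auto simp: Let_def)

definition run_side :: "real list \<Rightarrow> side_state" where
  "run_side ys = foldl (\<lambda>st x. insert_point x st) ({0}, {0}, id) ys"

lemma run_block_structure:
  assumes "distinct ys" "\<forall>y\<in>set ys. 0 < y"
  shows "\<exists>L t. run_side ys = (insert 0 (set ys), L, t) \<and> block_structure (insert 0 (set ys)) L t"
  using assms
proof (induction ys rule: rev_induct)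
  case Nil
  have "block_structure {0} {0} id" by unfold_locales (auto simp: good_block_def)
  then show ?case by (simp add: run_side_def)
next
  case (snoc y ys)
  then obtain L t where "run_side ys = (insert 0 (set ys), L, t)" "block_structure (insert 0 (set ys)) L t"
    by auto
  moreover have "y \<notin> insert 0 (set ys)" "0 < y" using snoc.prems by auto
  ultimately obtain L' t' where
    "insert_point y (run_side ys) = (insert y (insert 0 (set ys)), L', t')"
    "block_structure (insert y (insert 0 (set ys))) L' t'"
    using block_structure.insert_point by metis
  moreover have "run_side (ys @ [y]) = insert_point y (run_side ys)" by (simp add: run_side_def)
  ultimately show ?case by (auto simp: insert_commute)
qed

definition side_range :: "real list \<Rightarrow> real \<Rightarrow> real" where
  "side_range ys d = snd (snd (run_side ys)) d - d"

lemma side_range_structure: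
  assumes "distinct ys" "\<forall>y\<in>set ys. 0 < y"
  obtains L t where "block_structure (insert 0 (set ys)) L t" "\<And>d. side_range ys d = t d - d"
  using run_block_structure[OF assms] unfolding side_range_def by force

lemma side_range_snoc: "\<exists>q. \<forall>d. d \<noteq> q \<longrightarrow> side_range (ys @ [y]) d = side_range ys d"
proof -
  obtain q v where "snd (snd (insert_point y (run_side ys))) = (snd (snd (run_side ys)))(q := v)"
    using insert_point_target by blast
  then show ?thesis by (auto simp: side_range_def run_side_def)
qed

section \<open>Reflection and the lower bound\<close>

definition right_side :: "real \<Rightarrow> real set \<Rightarrow> real set" where
  "right_side s P = (\<lambda>p. p - s) ` {p \<in> P. s \<le> p}"

lemma reachable_reflect:
  assumes "(a, b) \<in> (induced_edges P \<rho>)\<^sup>*"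
  shows "(-a, -b) \<in> (induced_edges (uminus ` P) (\<lambda>p. \<rho> (-p)))\<^sup>*"
  using assms
proof (induction rule: rtrancl_induct)
  case (step y z)
  then have "(-y, -z) \<in> induced_edges (uminus ` P) (\<lambda>p. \<rho> (-p))"
    by (auto simp: induced_edges_def abs_minus_commute)
  with step.IH show ?case by (rule rtrancl_into_rtrancl)
qed simp

lemma feasible_reflect:
  assumes "feasible s P \<rho>"
  shows "feasible (-s) (uminus ` P) (\<lambda>p. \<rho> (-p))"
proof -
  have "-p \<notin> P" if "p \<notin> uminus ` P" for p using that by force
  then show ?thesis
    using assms reachable_reflect[of s _ P \<rho>] unfolding feasible_def range_assignment_def by auto
qed

lemma cost_reflect: "cost \<alpha> (uminus ` P) (\<lambda>p. \<rho> (-p)) = cost \<alpha> P \<rho>"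
  unfolding cost_def by (subst sum.reindex) (auto simp: inj_on_def)

lemma rtrancl_leaves_set:
  assumes "(a, b) \<in> E\<^sup>*" "a \<in> S" "b \<notin> S"
  shows "\<exists>u v. (u, v) \<in> E \<and> u \<in> S \<and> v \<notin> S"
  using assms by (induction rule: rtrancl_induct) auto

text \<open>Each gap is crossed by an edge \<open>(u, w)\<close>; charged to \<open>u\<close>, the gaps of \<open>u\<close> lie in
  \<open>[u, u + \<rho> u]\<close>.\<close>

lemma gap_cost_right_side_le_cost:
  assumes "finite P" "feasible s P \<rho>" "1 \<le> \<alpha>"
  shows "gap_cost \<alpha> (right_side s P) \<le> cost \<alpha> P \<rho>"
proof -
  let ?D = "right_side s P" and ?E = "induced_edges P \<rho>"
  let ?G = "?D - {Max ?D}"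
  let ?gap = "\<lambda>d. next_point ?D d - d"
  have finite_D: "finite ?D" using assms(1) by (simp add: right_side_def)
  have in_D: "d \<in> ?D \<longleftrightarrow> s + d \<in> P \<and> 0 \<le> d" for d by (force simp: right_side_def)
  have range_nonneg: "0 \<le> \<rho> p" for p using assms(2) by (simp add: feasible_def range_assignment_def)
  have gap: "next_point ?D d \<in> ?D" "d < next_point ?D d" if "d \<in> ?G" for d
  proof -
    have "d \<le> Max ?D" "Max ?D \<in> ?D" using finite_D that by (auto intro: Max_in)
    then have "d < Max ?D" using that by auto
    then show "next_point ?D d \<in> ?D" "d < next_point ?D d"
      using finite_D \<open>Max ?D \<in> ?D\<close> by (auto intro: next_point_in next_point_gt)
  qed
  have "\<exists>u\<in>P. u - s \<le> d \<and> next_point ?D d \<le> u - s + \<rho> u" if d: "d \<in> ?G" for d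
  proof -
    have "(s, s + next_point ?D d) \<in> ?E\<^sup>*"
      using assms(2) gap[OF d] in_D unfolding feasible_def by blast
    moreover have "0 \<le> d" using d in_D by blast
    ultimately obtain u w where uw: "(u, w) \<in> ?E" "u \<le> s + d" "s + d < w"
      using rtrancl_leaves_set[of s _ ?E "{p. p \<le> s + d}"] gap[OF d] by fastforce
    then have "w - s \<in> ?D" "u \<in> P" "w - u \<le> \<rho> u"
      using \<open>0 \<le> d\<close> in_D[of "w - s"] by (auto simp: induced_edges_def)
    then have "next_point ?D d \<le> w - s"
      using finite_D uw(3) by (intro next_point_le) auto
    then show ?thesis using uw(2) \<open>u \<in> P\<close> \<open>w - u \<le> \<rho> u\<close> by force
  qed
  then obtain owner where owner: "\<And>d. d \<in> ?G \<Longrightarrow>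
      owner d \<in> P \<and> owner d - s \<le> d \<and> next_point ?D d \<le> owner d - s + \<rho> (owner d)"
    by metis
  have "gap_cost \<alpha> ?D = (\<Sum>u\<in>P. \<Sum>d\<in>{d \<in> ?G. owner d = u}. ?gap d powr \<alpha>)"
    unfolding gap_cost_def using finite_D assms(1) owner by (intro sum.group[symmetric]) auto
  also have "\<dots> \<le> (\<Sum>u\<in>P. \<rho> u powr \<alpha>)"
  proof (rule sum_mono)
    fix u assume "u \<in> P"
    let ?Gu = "{d \<in> ?G. owner d = u}"
    have "(\<Sum>d\<in>?Gu. ?gap d powr \<alpha>) \<le> (\<Sum>d\<in>?Gu. ?gap d) powr \<alpha>"
      using finite_D gap assms(3) by (intro sum_powr_le_powr_sum) (auto simp: less_imp_le)
    also have "\<dots> \<le> ((u - s + \<rho> u) - (u - s)) powr \<alpha>"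
    proof (intro powr_mono2)
      show "(\<Sum>d\<in>?Gu. ?gap d) \<le> (u - s + \<rho> u) - (u - s)"
        using finite_D owner range_nonneg by (intro sum_gaps_within_le) auto
    qed (use assms(3) gap(2) in \<open>auto intro!: sum_nonneg simp: less_imp_le\<close>)
    finally show "(\<Sum>d\<in>?Gu. ?gap d powr \<alpha>) \<le> \<rho> u powr \<alpha>" by simp
  qed
  also have "\<dots> = cost \<alpha> P \<rho>" by (simp add: cost_def)
  finally show ?thesis .
qed

section \<open>Both sides of the source\<close>

definition right_dists :: "real \<Rightarrow> real list \<Rightarrow> real list" where
  "right_dists s xs = map (\<lambda>x. x - s) (filter (\<lambda>x. s < x) xs)"

definition right_range :: "real \<Rightarrow> real list \<Rightarrow> real \<Rightarrow> real" where
  "right_range s xs p = side_range (right_dists s xs) (p - s)"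

lemma right_dists_valid:
  assumes "valid_insertion_seq s xs"
  shows "distinct (right_dists s xs)" "\<forall>y\<in>set (right_dists s xs). 0 < y"
  using assms by (auto simp: valid_insertion_seq_def right_dists_def distinct_map inj_on_def)

lemma set_right_dists: "insert 0 (set (right_dists s xs)) = right_side s (insert s (set xs))"
  by (force simp: right_dists_def right_side_def image_iff)

lemma right_range_structure:
  assumes "valid_insertion_seq s xs"
  obtains L t where "block_structure (right_side s (insert s (set xs))) L t"
    "\<And>p. right_range s xs p = t (p - s) - (p - s)"
  using side_range_structure[OF right_dists_valid[OF assms]] unfolding set_right_dists right_range_def by metis

lemma right_range_nonneg:
  assumes "valid_insertion_seq s xs"
  shows "0 \<le> right_range s xs p"
  using block_structure.target_ge by (metis assms diff_ge_0_iff_ge right_range_structure)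

lemma right_range_outside:
  assumes "valid_insertion_seq s xs" "p \<notin> insert s (set xs) \<or> p < s"
  shows "right_range s xs p = 0"
proof -
  have "p - s \<notin> right_side s (insert s (set xs))" using assms(2) by (auto simp: right_side_def)
  then show ?thesis using block_structure.target_outside right_range_structure[OF assms(1)] by (metis diff_self)
qed

lemma right_range_cover:
  assumes "valid_insertion_seq s xs" "q \<in> insert s (set xs)" "s < q"
  shows "\<exists>w\<in>insert s (set xs). s \<le> w \<and> w < q \<and> q - w \<le> right_range s xs w"
proof -
  obtain L t where side: "block_structure (right_side s (insert s (set xs))) L t"
    and range: "\<And>p. right_range s xs p = t (p - s) - (p - s)"
    using right_range_structure[OF assms(1)] by blast
  have "q - s \<in> right_side s (insert s (set xs))" using assms(2,3) by (auto simp: right_side_def)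
  then obtain v where "v \<in> right_side s (insert s (set xs))" "v < q - s" "q - s \<le> t v"
    using block_structure.cover[OF side] assms(3) by force
  then show ?thesis
    by (intro bexI[of _ "s + v"]) (auto simp: range right_side_def)
qed

lemma right_range_cost:
  assumes "valid_insertion_seq s xs" "1 \<le> \<alpha>" "admissible_block_factor \<alpha> K"
  shows "(\<Sum>p\<in>insert s (set xs). right_range s xs p powr \<alpha>) \<le> K * gap_cost \<alpha> (right_side s (insert s (set xs)))"
proof -
  let ?P = "insert s (set xs)"
  obtain L t where side: "block_structure (right_side s ?P) L t"
    and range: "\<And>p. right_range s xs p = t (p - s) - (p - s)"
    using right_range_structure[OF assms(1)] by blast
  have "(\<Sum>p\<in>?P. right_range s xs p powr \<alpha>) = (\<Sum>p\<in>{p \<in> ?P. s \<le> p}. right_range s xs p powr \<alpha>)"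
  proof (rule sum.mono_neutral_right)
    show "\<forall>p\<in>?P - {p \<in> ?P. s \<le> p}. right_range s xs p powr \<alpha> = 0"
    proof
      fix p assume "p \<in> ?P - {p \<in> ?P. s \<le> p}"
      then have "p < s" by auto
      then show "right_range s xs p powr \<alpha> = 0" using right_range_outside[OF assms(1)] by simp
    qed
  qed auto
  also have "\<dots> = (\<Sum>d\<in>right_side s ?P. (t d - d) powr \<alpha>)"
    unfolding right_side_def by (subst sum.reindex) (auto simp: inj_on_def range)
  also have "\<dots> \<le> K * gap_cost \<alpha> (right_side s ?P)"
    using block_structure.cost_le[OF side assms(2,3)] .
  finally show ?thesis .
qed

lemma right_range_snoc_left: "\<not> s < x \<Longrightarrow> right_range s (xs @ [x]) = right_range s xs"
  by (simp add: right_range_def right_dists_def fun_eq_iff)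

lemma right_range_snoc: "\<exists>z. {p. right_range s (xs @ [x]) p \<noteq> right_range s xs p} \<subseteq> {z}"
proof (cases "s < x")
  case True
  obtain q where q: "\<forall>d. d \<noteq> q \<longrightarrow> side_range (right_dists s xs @ [x - s]) d = side_range (right_dists s xs) d"
    using side_range_snoc by blast
  have "right_range s (xs @ [x]) p = right_range s xs p" if "p \<noteq> s + q" for p
    using True q[rule_format, of "p - s"] that by (auto simp: right_range_def right_dists_def)
  then show ?thesis by blast
qed (simp add: right_range_snoc_left)

lemma reachable_right:
  assumes "valid_insertion_seq s xs" "\<And>p. right_range s xs p \<le> \<rho> p"
    and "q \<in> insert s (set xs)" "s \<le> q"
  shows "(s, q) \<in> (induced_edges (insert s (set xs)) \<rho>)\<^sup>*"
  using assms(3,4)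
proof (induction "card {v \<in> insert s (set xs). v < q}" arbitrary: q rule: less_induct)
  case less
  show ?case
  proof (cases "q = s")
    case False
    then obtain w where w: "w \<in> insert s (set xs)" "s \<le> w" "w < q" "q - w \<le> right_range s xs w"
      using right_range_cover[OF assms(1) less.prems(1)] less.prems(2) by force
    have "card {v \<in> insert s (set xs). v < w} < card {v \<in> insert s (set xs). v < q}"
      using w by (intro psubset_card_mono) auto
    then have "(s, w) \<in> (induced_edges (insert s (set xs)) \<rho>)\<^sup>*" using less.hyps w by blast
    moreover have "(w, q) \<in> induced_edges (insert s (set xs)) \<rho>"
      using w less.prems assms(2)[of w] by (auto simp: induced_edges_def)
    ultimately show ?thesis by (rule rtrancl_into_rtrancl)
  qed simp
qed

definition broadcast :: algorithm where
  "broadcast s xs p = max (right_range s xs p) (right_range (-s) (map uminus xs) (-p))"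

lemma valid_insertion_seq_reflect:
  "valid_insertion_seq s xs \<Longrightarrow> valid_insertion_seq (-s) (map uminus xs)"
  by (auto simp: valid_insertion_seq_def distinct_map inj_on_def)

lemma broadcast_reflect: "broadcast (-s) (map uminus xs) p = broadcast s xs (-p)"
  by (simp add: broadcast_def comp_def max.commute)

lemma broadcast_reachable_right:
  assumes "valid_insertion_seq s xs" "q \<in> insert s (set xs)" "s \<le> q"
  shows "(s, q) \<in> (induced_edges (insert s (set xs)) (broadcast s xs))\<^sup>*"
  using assms by (intro reachable_right) (auto simp: broadcast_def)

lemma broadcast_feasible:
  assumes "valid_insertion_seq s xs"
  shows "feasible s (insert s (set xs)) (broadcast s xs)"
proof -
  let ?P = "insert s (set xs)"
  have reach: "(s, q) \<in> (induced_edges ?P (broadcast s xs))\<^sup>*" if "q \<in> ?P" for q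
  proof (cases "s \<le> q")
    case False
    have "(-s, -q) \<in> (induced_edges (uminus ` ?P) (broadcast (-s) (map uminus xs)))\<^sup>*"
      using broadcast_reachable_right[OF valid_insertion_seq_reflect[OF assms], of "-q"] that False
      by simp
    from reachable_reflect[OF this] show ?thesis
      by (simp add: broadcast_reflect image_image)
  qed (use broadcast_reachable_right[OF assms] that in blast)
  have "0 \<le> broadcast s xs p" for p
    using right_range_nonneg[OF assms] by (simp add: broadcast_def le_max_iff_disj)
  moreover have "broadcast s xs p = 0" if "p \<notin> ?P" for p
  proof -
    have "-p \<notin> insert (-s) (set (map uminus xs))" using that by force
    then show ?thesis
      using that right_range_outside[OF assms, of p]
        right_range_outside[OF valid_insertion_seq_reflect[OF assms], of "-p"]
      by (simp add: broadcast_def)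
  qed
  ultimately show ?thesis
    using reach unfolding feasible_def range_assignment_def by simp
qed

lemma broadcast_cost_le:
  assumes "valid_insertion_seq s xs" "1 \<le> \<alpha>" "admissible_block_factor \<alpha> K"
  shows "cost \<alpha> (insert s (set xs)) (broadcast s xs) \<le> K * (gap_cost \<alpha> (right_side s (insert s (set xs))) +
           gap_cost \<alpha> (right_side (-s) (insert (-s) (set (map uminus xs)))))"
proof -
  let ?P = "insert s (set xs)" and ?P' = "insert (-s) (set (map uminus xs))"
  let ?R = "right_range s xs" and ?L = "right_range (-s) (map uminus xs)"
  have reflect: "(\<Sum>p\<in>?P'. ?L p powr \<alpha>) = (\<Sum>p\<in>?P. ?L (-p) powr \<alpha>)"
    by (rule sum.reindex_cong[of uminus]) (auto simp: inj_on_def)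
  have "cost \<alpha> ?P (broadcast s xs) \<le> (\<Sum>p\<in>?P. ?R p powr \<alpha> + ?L (-p) powr \<alpha>)"
    unfolding cost_def broadcast_def by (intro sum_mono) (simp add: max_def)
  also have "\<dots> = (\<Sum>p\<in>?P. ?R p powr \<alpha>) + (\<Sum>p\<in>?P'. ?L p powr \<alpha>)"
    by (simp only: sum.distrib reflect)
  also have "\<dots> \<le> K * gap_cost \<alpha> (right_side s ?P) + K * gap_cost \<alpha> (right_side (-s) ?P')"
    using right_range_cost[OF assms] right_range_cost[OF valid_insertion_seq_reflect[OF assms(1)] assms(2,3)]
    by (rule add_mono)
  finally show ?thesis by (simp add: distrib_left)
qed

lemma le_OPT:
  assumes "feasible s P \<rho>\<^sub>0" "\<And>\<rho>. feasible s P \<rho> \<Longrightarrow> b \<le> cost \<alpha> P \<rho>"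
  shows "b \<le> OPT \<alpha> s P"
  unfolding OPT_def using assms by (intro cInf_greatest) auto

lemma broadcast_approx:
  assumes "valid_insertion_seq s xs" "1 \<le> \<alpha>" "admissible_block_factor \<alpha> K"
  shows "cost \<alpha> (insert s (set xs)) (broadcast s xs) \<le> 2 * K * OPT \<alpha> s (insert s (set xs))"
proof -
  let ?P = "insert s (set xs)"
  note feasible = broadcast_feasible[OF assms(1)]
  have right: "gap_cost \<alpha> (right_side s ?P) \<le> OPT \<alpha> s ?P"
    using feasible gap_cost_right_side_le_cost[OF _ _ assms(2)] by (intro le_OPT) auto
  have reflect: "insert (-s) (set (map uminus xs)) = uminus ` ?P" by simp
  have left: "gap_cost \<alpha> (right_side (-s) (insert (-s) (set (map uminus xs)))) \<le> OPT \<alpha> s ?P"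
  proof (rule le_OPT[OF feasible])
    fix \<rho> assume "feasible s ?P \<rho>"
    then have "gap_cost \<alpha> (right_side (-s) (uminus ` ?P)) \<le> cost \<alpha> (uminus ` ?P) (\<lambda>p. \<rho> (-p))"
      by (intro gap_cost_right_side_le_cost feasible_reflect assms(2)) simp
    then show "gap_cost \<alpha> (right_side (-s) (insert (-s) (set (map uminus xs)))) \<le> cost \<alpha> ?P \<rho>"
      unfolding reflect cost_reflect .
  qed
  have "0 \<le> K"
    using assms(3) unfolding admissible_block_factor_def by (meson order.trans powr_ge_zero)
  then have "K * (gap_cost \<alpha> (right_side s ?P) + gap_cost \<alpha> (right_side (-s) (insert (-s) (set (map uminus xs)))))
      \<le> K * (OPT \<alpha> s ?P + OPT \<alpha> s ?P)"
    using right left by (intro mult_left_mono add_mono)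
  then show ?thesis
    using broadcast_cost_le[OF assms] by simp
qed

lemma broadcast_stable:
  assumes "valid_insertion_seq s (xs @ [x])"
  shows "card {p. broadcast s (xs @ [x]) p \<noteq> broadcast s xs p} \<le> 1"
proof -
  have right: "\<exists>z. {p. broadcast s (xs @ [x]) p \<noteq> broadcast s xs p} \<subseteq> {z}" if "s < x" for s x xs
  proof -
    obtain z where z: "{p. right_range s (xs @ [x]) p \<noteq> right_range s xs p} \<subseteq> {z}"
      using right_range_snoc by blast
    have left: "right_range (-s) (map uminus (xs @ [x])) = right_range (-s) (map uminus xs)"
      using right_range_snoc_left that by simp
    have "broadcast s (xs @ [x]) p = broadcast s xs p" if "p \<noteq> z" for p
    proof -
      have "right_range s (xs @ [x]) p = right_range s xs p" using z that by blast
      then show ?thesis using left by (simp add: broadcast_def)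
    qed
    then show ?thesis by blast
  qed
  have "x \<noteq> s" using assms by (simp add: valid_insertion_seq_def)
  obtain z where "{p. broadcast s (xs @ [x]) p \<noteq> broadcast s xs p} \<subseteq> {z}"
  proof (cases "s < x")
    case False
    then obtain z where
      "{p. broadcast (-s) (map uminus (xs @ [x])) p \<noteq> broadcast (-s) (map uminus xs) p} \<subseteq> {z}"
      using right[of "-s" "-x" "map uminus xs"] \<open>x \<noteq> s\<close> by auto
    then have "broadcast s (xs @ [x]) p = broadcast s xs p" if "p \<noteq> -z" for p
      using that unfolding broadcast_reflect by (auto simp del: map_append dest!: subsetD[of _ _ "-p"])
    then show ?thesis using that by blast
  qed (use right that in blast)
  then have "card {p. broadcast s (xs @ [x]) p \<noteq> broadcast s xs p} \<le> card {z}"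
    by (intro card_mono) auto
  then show ?thesis by simp
qed

lemma broadcast_stable_approx:
  assumes "1 \<le> \<alpha>" "admissible_block_factor \<alpha> K"
  shows "stable_approx \<alpha> (2 * K) broadcast"
  unfolding stable_approx_def
  using broadcast_feasible broadcast_approx[OF _ assms] broadcast_stable by blast

theorem theorem8:
  shows "(\<forall>\<alpha>::real. \<alpha> > 1 \<longrightarrow> (\<exists>c::real. \<exists>A. stable_approx \<alpha> c A))
         \<and> (\<exists>A. stable_approx 2 (2 * (3 + sqrt 5)) A)"
proof (intro conjI allI impI)
  fix \<alpha> :: real
  assume "\<alpha> > 1"
  then have "stable_approx \<alpha> (2 * 4 powr \<alpha>) broadcast"
    by (intro broadcast_stable_approx admissible_block_factor_4_powr) auto
  then show "\<exists>c A. stable_approx \<alpha> c A" by blast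
next
  have "stable_approx 2 (2 * (3 + sqrt 5)) broadcast"
    by (intro broadcast_stable_approx admissible_block_factor_golden) simp
  then show "\<exists>A. stable_approx 2 (2 * (3 + sqrt 5)) A" by blast
qed

end
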